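(* Fix a positive integer $g$ and constants $\epsilon>0$, $b>0$, $\eta>0$. For each $N$, let $G_N$ be a random graph drawn from an inhomogeneous random graph model on the node set $V=\{1,\dots,N\}$ with edge probabilities $p_{ij}$ ($i\neq j$) satisfying $p_{ij}>(1+\epsilon)/N$ for all $i\neq j$. Suppose that the set $V_p\subset V$ of nodes $i$ such that $p_{ij}<b/N$ for all $j\neq i$ satisfies $|V_p|>\eta N$. Let $D_g(N)$ denote the number of subsets $S\subset V$ that are $g$-dangling in $G_N$. Then $\mathbb{E}[D_g(N)]$ grows proportionally to $N$: there exist constants $c>0$ and $N_0$ (depending on $g,\epsilon,b,\eta$ but not on $N$) such that $cN\le \mathbb{E}[D_g(N)]\le N$ for all $N\ge N_0$.
   Context: An inhomogeneous random graph model on $N$ nodes is a random undirected graph without self-loops in which each pair $\{i,j\}$, $i\neq j$, is an edge independently with probability $p_{ij}$. In an unweighted graph $G=(V,E)$, a subset $S\subset V$ is called $g$-dangling if: (i) $|S|=g$; (ii) the node-induced subgraph on $S$ has exactly $g-1$ edges and contains no cycle (i.e., it is a tree); (iii) there is exactly one edge of $G$ with one endpoint in $S$ and the other in $V\setminus S$. *)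

theory Defs
  imports Main "HOL-Library.FuncSet" Complex_Main
begin

text \<open>Node set V = {1..N}; an undirected graph without self-loops on V is a set of
  edges, each edge a two-element subset of V.\<close>

definition node_set :: "nat \<Rightarrow> nat set" where
  "node_set N = {1..N}"

definition all_pairs :: "nat \<Rightarrow> nat set set" where
  "all_pairs N = {{i, j} | i j. i \<in> node_set N \<and> j \<in> node_set N \<and> i \<noteq> j}"

definition edge_prob :: "(nat \<Rightarrow> nat \<Rightarrow> real) \<Rightarrow> nat set \<Rightarrow> real" where
  "edge_prob p e = p (Min e) (Max e)"

definition graph_prob :: "nat \<Rightarrow> (nat \<Rightarrow> nat \<Rightarrow> real) \<Rightarrow> nat set set \<Rightarrow> real" where
  "graph_prob N p E =
     (\<Prod>e\<in>all_pairs N. if e \<in> E then edge_prob p e else 1 - edge_prob p e)"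

definition adj :: "nat set set \<Rightarrow> nat \<Rightarrow> nat \<Rightarrow> bool" where
  "adj E u v \<longleftrightarrow> {u, v} \<in> E \<and> u \<noteq> v"

definition induced_edges :: "nat set set \<Rightarrow> nat set \<Rightarrow> nat set set" where
  "induced_edges E S = {e \<in> E. e \<subseteq> S}"

definition has_cycle_in :: "nat set set \<Rightarrow> nat set \<Rightarrow> bool" where
  "has_cycle_in E S \<longleftrightarrow> (\<exists>vs. length vs \<ge> 3 \<and> distinct vs \<and> set vs \<subseteq> S \<and>
      (\<forall>k. Suc k < length vs \<longrightarrow> adj E (vs ! k) (vs ! Suc k)) \<and>
      adj E (last vs) (hd vs))"

definition boundary_edges :: "nat set set \<Rightarrow> nat set \<Rightarrow> nat set set" where
  "boundary_edges E S = {e \<in> E. e \<inter> S \<noteq> {} \<and> \<not> e \<subseteq> S}"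

definition dangling :: "nat set set \<Rightarrow> nat \<Rightarrow> nat set \<Rightarrow> bool" where
  "dangling E g S \<longleftrightarrow> card S = g \<and> card (induced_edges E S) = g - 1 \<and>
      \<not> has_cycle_in E S \<and> card (boundary_edges E S) = 1"

definition D_count :: "nat \<Rightarrow> nat \<Rightarrow> nat set set \<Rightarrow> nat" where
  "D_count N g E = card {S. S \<subseteq> node_set N \<and> dangling E g S}"

definition expected_D :: "nat \<Rightarrow> nat \<Rightarrow> (nat \<Rightarrow> nat \<Rightarrow> real) \<Rightarrow> real" where
  "expected_D N g p = (\<Sum>E\<in>Pow (all_pairs N). graph_prob N p E * real (D_count N g E))"

definition V_p :: "nat \<Rightarrow> real \<Rightarrow> (nat \<Rightarrow> nat \<Rightarrow> real) \<Rightarrow> nat set" where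
  "V_p N b p = {i \<in> node_set N. \<forall>j\<in>node_set N. j \<noteq> i \<longrightarrow> p i j < b / real N}"

end

theory Submission
  imports Defs
begin

text \<open>Upper bound: a dangling set is a tree hanging off the rest of the graph by a single
  edge, and two different dangling sets of the same size can only meet when together they
  form a whole component.  Sending an isolated dangling set to its inner endpoint of the
  bridge and any other one to the outer endpoint is therefore injective, so there are at
  most N of them in every graph.

  Lower bound: for every g-subset S of the low-probability nodes V_p and every node j
  outside S, the event that the edges meeting S are exactly a star on S plus one edge to
  j makes S dangling.  These events are disjoint for different j and have probability at
  least (1/N)^g (1 - b/N)^(gN) \<ge> N^-g e^(-2bg); there are at least (\<eta>N/g)^g choices
  of S and N - g of j.\<close>

section \<open>Forests\<close>

lemma has_cycle_in_mono: "has_cycle_in E A \<Longrightarrow> A \<subseteq> B \<Longrightarrow> has_cycle_in E B"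
  unfolding has_cycle_in_def by blast

lemma finite_induced_edges: "finite A \<Longrightarrow> finite (induced_edges E A)"
  by (rule finite_subset[of _ "Pow A"]) (auto simp: induced_edges_def)

definition path_in :: "nat set set \<Rightarrow> nat set \<Rightarrow> nat list \<Rightarrow> bool" where
  "path_in E A vs \<longleftrightarrow> vs \<noteq> [] \<and> distinct vs \<and> set vs \<subseteq> A \<and>
     (\<forall>k. Suc k < length vs \<longrightarrow> adj E (vs ! k) (vs ! Suc k))"

lemma longest_path_in:
  assumes "finite A" "A \<noteq> {}"
  obtains vs where "path_in E A vs" "\<And>ws. path_in E A ws \<Longrightarrow> length ws \<le> length vs"
proof -
  obtain a where "a \<in> A" using assms(2) by blast
  then have "path_in E A [a]" by (simp add: path_in_def)
  moreover have "length ws < Suc (card A)" if "path_in E A ws" for ws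
    using that assms(1) distinct_card[of ws] card_mono[of A "set ws"]
    by (auto simp: path_in_def)
  ultimately show ?thesis
    using ex_has_greatest_nat[of "path_in E A" "[a]" length "Suc (card A)"] that by blast
qed

lemma path_in_snoc:
  assumes "path_in E A vs" "w \<in> A" "w \<notin> set vs" "adj E (last vs) w"
  shows "path_in E A (vs @ [w])"
  unfolding path_in_def
proof (intro conjI allI impI)
  show "distinct (vs @ [w])" "set (vs @ [w]) \<subseteq> A"
    using assms(1-3) by (auto simp: path_in_def)
  fix k assume k: "Suc k < length (vs @ [w])"
  show "adj E ((vs @ [w]) ! k) ((vs @ [w]) ! Suc k)"
  proof (cases "Suc k < length vs")
    case True
    then show ?thesis using assms(1) by (simp add: path_in_def nth_append)
  next
    case False
    with k have "k = length vs - 1" by simp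
    with assms(1,4) show ?thesis by (simp add: path_in_def nth_append last_conv_nth)
  qed
qed simp

lemma has_cycle_in_if_path_closes:
  assumes "path_in E A vs" "i + 3 \<le> length vs" "adj E (last vs) (vs ! i)"
  shows "has_cycle_in E A"
  unfolding has_cycle_in_def
proof (intro exI[of _ "drop i vs"] conjI allI impI)
  show "3 \<le> length (drop i vs)" "distinct (drop i vs)" "set (drop i vs) \<subseteq> A"
    using assms(1,2) set_drop_subset[of i vs] by (auto simp: path_in_def)
  show "adj E (last (drop i vs)) (hd (drop i vs))"
    using assms(2,3) by (simp add: hd_drop_conv_nth)
  fix k assume "Suc k < length (drop i vs)"
  then show "adj E (drop i vs ! k) (drop i vs ! Suc k)"
    using assms(1) by (simp add: path_in_def)
qed

text \<open>The last vertex of a longest path has a neighbour other than its predecessor on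
  the path; by maximality that neighbour lies on the path, closing a cycle.\<close>
lemma has_cycle_in_if_two_neighbours:
  assumes "finite A" "A \<noteq> {}"
    and nb: "\<forall>x\<in>A. \<exists>y1 y2. y1 \<noteq> y2 \<and> y1 \<in> A \<and> y2 \<in> A \<and> adj E x y1 \<and> adj E x y2"
  shows "has_cycle_in E A"
proof -
  obtain vs where vs: "path_in E A vs" and longest: "\<And>ws. path_in E A ws \<Longrightarrow> length ws \<le> length vs"
    using longest_path_in[OF assms(1,2)] by blast
  define n where "n = length vs"
  have "last vs \<in> A" using vs by (auto simp: path_in_def)
  then obtain w where w: "w \<in> A" "adj E (last vs) w" "n \<ge> 2 \<Longrightarrow> w \<noteq> vs ! (n - 2)"
    using nb by blast
  have "w \<in> set vs"
    using path_in_snoc[OF vs w(1) _ w(2)] longest by fastforce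
  then obtain i where i: "i < n" "vs ! i = w" by (auto simp: in_set_conv_nth n_def)
  have "i \<noteq> n - 1"
    using vs w(2) i by (auto simp: path_in_def n_def last_conv_nth adj_def)
  moreover have "n \<ge> 2 \<Longrightarrow> i \<noteq> n - 2" using w(3) i by auto
  ultimately have "i + 3 \<le> n" using i(1) by linarith
  with vs w(2) i show ?thesis by (auto intro: has_cycle_in_if_path_closes simp: n_def)
qed

lemma card_2_obtain_other:
  assumes "card e = 2" "x \<in> e"
  obtains y where "y \<noteq> x" "e = {x, y}"
proof -
  from assms(1) obtain a b where "e = {a, b}" "a \<noteq> b" by (auto simp: card_2_iff)
  with assms(2) that show ?thesis by (metis empty_iff insert_commute insert_iff)
qed

lemma acyclic_has_vertex_inner_degree_le_1:
  assumes two: "\<forall>e\<in>E. card e = 2" and "finite A" "A \<noteq> {}" "\<not> has_cycle_in E A"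
  shows "\<exists>x\<in>A. card {e\<in>E. x \<in> e \<and> e \<subseteq> A} \<le> 1"
proof (rule ccontr)
  assume low: "\<not> ?thesis"
  have "\<exists>y1 y2. y1 \<noteq> y2 \<and> y1 \<in> A \<and> y2 \<in> A \<and> adj E x y1 \<and> adj E x y2" if x: "x \<in> A" for x
  proof -
    define D where "D = {e\<in>E. x \<in> e \<and> e \<subseteq> A}"
    have "finite D" by (rule finite_subset[of _ "Pow A"]) (use assms(2) in \<open>auto simp: D_def\<close>)
    moreover have "\<not> card D \<le> Suc 0" using x low by (auto simp: D_def)
    ultimately obtain e1 e2 where e: "e1 \<in> D" "e2 \<in> D" "e1 \<noteq> e2"
      by (auto simp: card_le_Suc0_iff_eq)
    obtain y1 where "y1 \<noteq> x" "e1 = {x, y1}"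
      by (rule card_2_obtain_other[of e1 x]) (use e(1) two in \<open>auto simp: D_def\<close>)
    moreover obtain y2 where "y2 \<noteq> x" "e2 = {x, y2}"
      by (rule card_2_obtain_other[of e2 x]) (use e(2) two in \<open>auto simp: D_def\<close>)
    ultimately show ?thesis using e by (auto simp: D_def adj_def)
  qed
  then show False using has_cycle_in_if_two_neighbours[OF assms(2,3)] assms(4) by blast
qed

lemma card_induced_edges_acyclic:
  assumes two: "\<forall>e\<in>E. card e = 2"
  shows "finite A \<Longrightarrow> A \<noteq> {} \<Longrightarrow> \<not> has_cycle_in E A \<Longrightarrow>
         card (induced_edges E A) \<le> card A - 1"
proof (induction "card A" arbitrary: A rule: less_induct)
  case less
  obtain x where x: "x \<in> A" and deg: "card {e\<in>E. x \<in> e \<and> e \<subseteq> A} \<le> 1"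
    using acyclic_has_vertex_inner_degree_le_1[OF two less.prems] by blast
  show ?case
  proof (cases "A = {x}")
    case True
    have "induced_edges E A = {}"
      using two True by (force simp: induced_edges_def dest: card_mono[of "{x}", rotated])
    then show ?thesis by simp
  next
    case False
    define A' where "A' = A - {x}"
    have A': "finite A'" "A' \<noteq> {}" "card A' = card A - 1"
      using less.prems(1) x False by (auto simp: A'_def)
    have "card A' > 0" using A'(1,2) card_gt_0_iff by blast
    have "\<not> has_cycle_in E A'" using less.prems(3) has_cycle_in_mono[of E A' A] by (auto simp: A'_def)
    moreover have "card A' < card A" using A'(3) \<open>card A' > 0\<close> by linarith
    ultimately have IH: "card (induced_edges E A') \<le> card A' - 1" using less.hyps A'(1,2) by simp
    have "finite {e\<in>E. x \<in> e \<and> e \<subseteq> A}"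
      by (rule finite_subset[of _ "Pow A"]) (use less.prems(1) in auto)
    moreover have "induced_edges E A \<subseteq> induced_edges E A' \<union> {e\<in>E. x \<in> e \<and> e \<subseteq> A}"
      by (auto simp: induced_edges_def A'_def)
    ultimately have "card (induced_edges E A) \<le> card (induced_edges E A' \<union> {e\<in>E. x \<in> e \<and> e \<subseteq> A})"
      using finite_induced_edges[OF A'(1)] by (intro card_mono) auto
    also have "\<dots> \<le> card (induced_edges E A') + card {e\<in>E. x \<in> e \<and> e \<subseteq> A}"
      by (rule card_Un_le)
    finally have "card (induced_edges E A) \<le> card (induced_edges E A') + card {e\<in>E. x \<in> e \<and> e \<subseteq> A}" .
    with IH deg A'(3) \<open>card A' > 0\<close> show ?thesis by linarith
  qed
qed

section \<open>Dangling sets\<close>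

text \<open>A dangling set is a tree, hence connected: every way of splitting it is crossed by
  one of its edges, for otherwise both parts are forests and together have at most
  card S - 2 edges.\<close>
lemma dangling_crossing_edge:
  assumes two: "\<forall>e\<in>E. card e = 2" and fin: "finite S" and dang: "dangling E g S"
    and "S \<inter> X \<noteq> {}" "\<not> S \<subseteq> X"
  shows "\<exists>e\<in>E. e \<subseteq> S \<and> e \<inter> X \<noteq> {} \<and> \<not> e \<subseteq> X"
proof (rule ccontr)
  assume no_crossing: "\<not> ?thesis"
  define A where "A = S \<inter> X"
  define B where "B = S - X"
  have AB: "A \<noteq> {}" "B \<noteq> {}" "finite A" "finite B"
    using assms(4,5) fin by (auto simp: A_def B_def)
  have "card A + card B = card S"
    using fin unfolding A_def B_def by (metis Int_Diff_Un Int_Diff_disjoint card_Un_disjoint finite_Diff finite_Int)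
  moreover have "card (induced_edges E S) \<le> (card A - 1) + (card B - 1)"
  proof -
    have "\<not> has_cycle_in E A" "\<not> has_cycle_in E B"
      using dang has_cycle_in_mono[of E A S] has_cycle_in_mono[of E B S]
      by (auto simp: dangling_def A_def B_def)
    then have forests: "card (induced_edges E A) \<le> card A - 1" "card (induced_edges E B) \<le> card B - 1"
      using card_induced_edges_acyclic[OF two] AB by auto
    have "induced_edges E S \<subseteq> induced_edges E A \<union> induced_edges E B"
      using no_crossing by (auto simp: induced_edges_def A_def B_def)
    then have "card (induced_edges E S) \<le> card (induced_edges E A \<union> induced_edges E B)"
      using finite_induced_edges AB by (intro card_mono) auto
    also have "\<dots> \<le> card (induced_edges E A) + card (induced_edges E B)" by (rule card_Un_le)
    finally show ?thesis using forests by linarith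
  qed
  moreover have "card A \<ge> 1" "card B \<ge> 1" using AB by (auto simp: Suc_le_eq card_gt_0_iff)
  ultimately show False using dang by (auto simp: dangling_def)
qed

lemma dangling_subset_if_boundary_empty:
  assumes two: "\<forall>e\<in>E. card e = 2" and "finite S" "dangling E g S"
    and "boundary_edges E X = {}" "S \<inter> X \<noteq> {}"
  shows "S \<subseteq> X"
  using dangling_crossing_edge[OF assms(1-3,5)] assms(4) by (auto simp: boundary_edges_def)

definition bridge :: "nat set set \<Rightarrow> nat set \<Rightarrow> nat set" where
  "bridge E S = the_elem (boundary_edges E S)"

definition bridge_in :: "nat set set \<Rightarrow> nat set \<Rightarrow> nat" where
  "bridge_in E S = the_elem (bridge E S \<inter> S)"

definition bridge_out :: "nat set set \<Rightarrow> nat set \<Rightarrow> nat" where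
  "bridge_out E S = the_elem (bridge E S - S)"

lemma bridge_props:
  assumes two: "\<forall>e\<in>E. card e = 2" and one: "card (boundary_edges E S) = 1"
  shows "boundary_edges E S = {bridge E S}" "bridge E S \<in> E"
    "bridge E S = {bridge_in E S, bridge_out E S}" "bridge_in E S \<in> S" "bridge_out E S \<notin> S"
proof -
  obtain e where be: "boundary_edges E S = {e}" using one card_1_singletonE by blast
  then have e: "bridge E S = e" "e \<in> E" "e \<inter> S \<noteq> {}" "\<not> e \<subseteq> S"
    by (auto simp: bridge_def boundary_edges_def)
  obtain a b where ab: "e = {a, b}" using two e(2) by (auto simp: card_2_iff)
  with e(3,4) have "(a \<in> S \<and> b \<notin> S) \<or> (b \<in> S \<and> a \<notin> S)" by auto
  with ab obtain u v where uv: "e = {u, v}" "u \<in> S" "v \<notin> S" by (metis insert_commute)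
  then have "bridge E S \<inter> S = {u}" "bridge E S - S = {v}" using e(1) by auto
  then have "bridge_in E S = u" "bridge_out E S = v" by (auto simp: bridge_in_def bridge_out_def)
  with be e uv show "boundary_edges E S = {bridge E S}" "bridge E S \<in> E"
    "bridge E S = {bridge_in E S, bridge_out E S}" "bridge_in E S \<in> S" "bridge_out E S \<notin> S"
    by auto
qed

text \<open>Two distinct dangling sets of the same size that meet cannot be nested, so each is
  left by an edge of the other; the only such edge is the bridge.\<close>
lemma bridge_subset_overlapping:
  assumes two: "\<forall>e\<in>E. card e = 2" and fin: "finite S" "finite T"
    and dang: "dangling E g S" "dangling E g T" and "S \<noteq> T" "S \<inter> T \<noteq> {}"
  shows "bridge E S \<subseteq> T"
proof -
  have "card T = card S" using dang by (simp add: dangling_def)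
  then have "\<not> T \<subseteq> S" using card_subset_eq[OF fin(1), of T] \<open>S \<noteq> T\<close> by auto
  moreover have "T \<inter> S \<noteq> {}" using \<open>S \<inter> T \<noteq> {}\<close> by auto
  ultimately obtain e where "e \<in> E" "e \<subseteq> T" "e \<inter> S \<noteq> {}" "\<not> e \<subseteq> S"
    using dangling_crossing_edge[OF two fin(2) dang(2)] by blast
  then have "e \<in> boundary_edges E S" by (auto simp: boundary_edges_def)
  with bridge_props(1)[OF two] dang(1) \<open>e \<subseteq> T\<close> show ?thesis by (auto simp: dangling_def)
qed

lemma boundary_edges_union_overlapping:
  assumes two: "\<forall>e\<in>E. card e = 2" and fin: "finite S" "finite T"
    and dang: "dangling E g S" "dangling E g T" and "S \<noteq> T" "S \<inter> T \<noteq> {}"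
  shows "boundary_edges E (S \<union> T) = {}"
proof -
  have "bridge E S \<subseteq> T" by (rule bridge_subset_overlapping[OF assms])
  moreover have "bridge E T \<subseteq> S"
    by (rule bridge_subset_overlapping[OF two fin(2,1) dang(2,1)]) (use assms(6,7) in auto)
  moreover have "boundary_edges E S = {bridge E S}" "boundary_edges E T = {bridge E T}"
    using bridge_props(1)[OF two] dang by (auto simp: dangling_def)
  ultimately have "boundary_edges E S \<subseteq> Pow (S \<union> T)" "boundary_edges E T \<subseteq> Pow (S \<union> T)"
    by auto
  then show ?thesis unfolding boundary_edges_def by blast
qed

lemma bridge_out_mem_overlapping:
  assumes two: "\<forall>e\<in>E. card e = 2" and fin: "finite S" "finite T"
    and dang: "dangling E g S" "dangling E g T" and "S \<noteq> T" "S \<inter> T \<noteq> {}"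
  shows "bridge_out E S \<in> T"
proof -
  have "bridge E S = {bridge_in E S, bridge_out E S}"
    using bridge_props(3)[OF two] dang(1) by (simp add: dangling_def)
  with bridge_subset_overlapping[OF assms] show ?thesis by simp
qed

text \<open>S \<union> T is closed, so S' lies in it and, being too large to fit into T - S, meets S;
  but then S' contains the outer vertex of S, which is its own.\<close>
lemma dangling_eq_if_bridge_out_eq:
  assumes two: "\<forall>e\<in>E. card e = 2" and fin: "finite S" "finite T" "finite S'"
    and dang: "dangling E g S" "dangling E g T" "dangling E g S'"
    and "S \<noteq> T" "S \<inter> T \<noteq> {}" and out_eq: "bridge_out E S' = bridge_out E S"
  shows "S' = S"
proof (rule ccontr)
  assume "S' \<noteq> S"
  have one: "card (boundary_edges E S') = 1" using dang(3) by (simp add: dangling_def)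
  have closed: "boundary_edges E (S \<union> T) = {}"
    using boundary_edges_union_overlapping[OF two fin(1,2) dang(1,2)] assms(8,9) by blast
  have "bridge_out E S' \<in> T"
    using bridge_out_mem_overlapping[OF two fin(1,2) dang(1,2)] assms(8,9) out_eq by simp
  moreover have "bridge E S' \<notin> boundary_edges E (S \<union> T)" using closed by simp
  ultimately have "bridge_in E S' \<in> S \<union> T"
    using bridge_props(2,3)[OF two one] by (auto simp: boundary_edges_def)
  then have "S' \<inter> (S \<union> T) \<noteq> {}" using bridge_props(4)[OF two one] by blast
  then have S'_sub: "S' \<subseteq> S \<union> T"
    using dangling_subset_if_boundary_empty[OF two fin(3) dang(3) closed] by blast
  have "S' \<inter> S \<noteq> {}"
  proof
    assume "S' \<inter> S = {}"
    with S'_sub have "S' \<subseteq> T - S" by blast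
    moreover have "T - S \<subset> T" using \<open>S \<inter> T \<noteq> {}\<close> by blast
    ultimately have "card S' < card T"
      using fin(2) by (meson card_mono finite_Diff le_less_trans psubset_card_mono)
    with dang(2,3) show False by (simp add: dangling_def)
  qed
  then have "bridge_out E S \<in> S'"
    using bridge_out_mem_overlapping[OF two fin(1,3) dang(1,3)] \<open>S' \<noteq> S\<close> by (auto simp: Int_commute)
  with out_eq bridge_props(5)[OF two one] show False by simp
qed

definition overlapped :: "nat set set \<Rightarrow> nat set \<Rightarrow> bool" where
  "overlapped F S \<longleftrightarrow> (\<exists>T\<in>F. T \<noteq> S \<and> T \<inter> S \<noteq> {})"

lemma bridge_in_ne_bridge_out:
  assumes two: "\<forall>e\<in>E. card e = 2" and F: "\<forall>S\<in>F. finite S \<and> dangling E g S"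
    and S: "S \<in> F" "\<not> overlapped F S" and S': "S' \<in> F" "overlapped F S'"
  shows "bridge_in E S \<noteq> bridge_out E S'"
proof
  assume eq: "bridge_in E S = bridge_out E S'"
  obtain T where T: "T \<in> F" "T \<noteq> S'" "T \<inter> S' \<noteq> {}" using S'(2) by (auto simp: overlapped_def)
  have "bridge_out E S' \<in> T"
    using bridge_out_mem_overlapping[OF two] F S'(1) T by (auto simp: Int_commute)
  moreover have "bridge_in E S \<in> S"
    using bridge_props(4)[OF two] F S(1) by (simp add: dangling_def)
  ultimately have "bridge_in E S \<in> T \<inter> S" using eq by simp
  then have "T = S" using S(2) T(1) unfolding overlapped_def by blast
  with T S' S(2) show False unfolding overlapped_def by blast
qed

lemma inj_on_bridge_end:
  assumes two: "\<forall>e\<in>E. card e = 2" and F: "\<forall>S\<in>F. finite S \<and> dangling E g S"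
  shows "inj_on (\<lambda>S. if overlapped F S then bridge_out E S else bridge_in E S) F"
proof (rule inj_onI)
  fix S S' assume S: "S \<in> F" and S': "S' \<in> F"
    and eq: "(if overlapped F S then bridge_out E S else bridge_in E S)
      = (if overlapped F S' then bridge_out E S' else bridge_in E S')"
  consider "overlapped F S" "overlapped F S'" | "\<not> overlapped F S" "\<not> overlapped F S'"
    | "\<not> overlapped F S" "overlapped F S'" | "overlapped F S" "\<not> overlapped F S'" by blast
  then show "S = S'"
  proof cases
    case 1
    then obtain T where T: "T \<in> F" "T \<noteq> S" "T \<inter> S \<noteq> {}" by (auto simp: overlapped_def)
    have out_eq: "bridge_out E S' = bridge_out E S" using eq 1 by simp
    have "finite S" "finite T" "finite S'" "dangling E g S" "dangling E g T" "dangling E g S'"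
      using F S S' T(1) by auto
    from dangling_eq_if_bridge_out_eq[OF two this _ _ out_eq] T(2,3) show ?thesis
      by (auto simp: Int_commute)
  next
    case 2
    have "bridge_in E S \<in> S" "bridge_in E S' \<in> S'"
      using bridge_props(4)[OF two] F S S' by (auto simp: dangling_def)
    with eq 2 have "bridge_in E S \<in> S' \<inter> S" by simp
    with 2(1) S' show ?thesis unfolding overlapped_def by blast
  next
    case 3
    with bridge_in_ne_bridge_out[OF two F S _ S'] eq show ?thesis by simp
  next
    case 4
    with bridge_in_ne_bridge_out[OF two F S' _ S] eq show ?thesis by simp
  qed
qed

lemma all_pairs_card_2: "e \<in> all_pairs N \<Longrightarrow> card e = 2 \<and> e \<subseteq> node_set N"
  by (auto simp: all_pairs_def)

lemma D_count_le:
  assumes "E \<subseteq> all_pairs N"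
  shows "D_count N g E \<le> N"
proof -
  have two: "\<forall>e\<in>E. card e = 2" and in_V: "\<forall>e\<in>E. e \<subseteq> node_set N"
    using assms all_pairs_card_2 by auto
  define F where "F = {S. S \<subseteq> node_set N \<and> dangling E g S}"
  have fin: "\<forall>S\<in>F. finite S \<and> dangling E g S"
    using finite_subset[of _ "node_set N"] by (auto simp: F_def node_set_def)
  have "(if overlapped F S then bridge_out E S else bridge_in E S) \<in> node_set N" if "S \<in> F" for S
  proof -
    have "bridge E S \<in> E" "bridge E S = {bridge_in E S, bridge_out E S}"
      using bridge_props(2,3)[OF two] that by (auto simp: F_def dangling_def)
    with in_V show ?thesis by auto
  qed
  with inj_on_bridge_end[OF two fin] have "card F \<le> card (node_set N)"
    by (intro card_inj_on_le) (auto simp: node_set_def)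
  then show ?thesis by (simp add: D_count_def F_def node_set_def)
qed

section \<open>The random graph model\<close>

lemma finite_all_pairs: "finite (all_pairs N)"
  by (rule finite_subset[of _ "Pow (node_set N)"]) (auto simp: all_pairs_def node_set_def)

lemma edge_prob_doubleton:
  assumes "p j i = p i j"
  shows "edge_prob p {i, j} = p i j"
  using assms by (cases "i \<le> j") (auto simp: edge_prob_def min_def max_def)

lemma sum_Pow_prod_bool:
  fixes h :: "'a \<Rightarrow> bool \<Rightarrow> 'b :: comm_semiring_1"
  assumes "finite U"
  shows "(\<Sum>E\<in>Pow U. \<Prod>e\<in>U. h e (e \<in> E)) = (\<Prod>e\<in>U. h e True + h e False)"
proof -
  have "(\<Prod>e\<in>U. h e (e \<in> X)) = (\<Prod>e\<in>X. h e True) * (\<Prod>e\<in>U - X. h e False)" if "X \<subseteq> U" for X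
  proof -
    have "(\<Prod>e\<in>U. h e (e \<in> X)) = (\<Prod>e\<in>U. if e \<in> X then h e True else h e False)"
      by (rule prod.cong) auto
    also have "\<dots> = (\<Prod>e\<in>U \<inter> X. h e True) * (\<Prod>e\<in>U - X. h e False)"
      using assms by (simp add: prod.If_cases Diff_eq)
    finally show ?thesis using that by (simp add: Int_absorb1)
  qed
  then show ?thesis by (simp add: prod_add[OF assms])
qed

text \<open>The indicator of E \<inter> K = R factorises over the elements of U, and then so does
  the whole sum.\<close>
lemma sum_Pow_prod_restrict:
  fixes q :: "'a \<Rightarrow> 'b :: comm_ring_1"
  assumes fin: "finite U" and "R \<subseteq> K" "K \<subseteq> U"
  shows "(\<Sum>E\<in>Pow U. (\<Prod>e\<in>U. if e \<in> E then q e else 1 - q e) * of_bool (E \<inter> K = R))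
        = (\<Prod>e\<in>K. if e \<in> R then q e else 1 - q e)"
proof -
  define h where "h e b = (if b then q e else 1 - q e) * (if e \<in> K \<and> b \<noteq> (e \<in> R) then 0 else 1)"
    for e b
  have indicator: "of_bool (E \<inter> K = R) = (\<Prod>e\<in>U. if e \<in> K \<and> (e \<in> E) \<noteq> (e \<in> R) then 0 else 1 :: 'b)"
    for E
  proof (cases "E \<inter> K = R")
    case False
    then obtain e where "e \<in> K" "(e \<in> E) \<noteq> (e \<in> R)" using assms(2) by blast
    with assms(3) fin have "(\<Prod>e\<in>U. if e \<in> K \<and> (e \<in> E) \<noteq> (e \<in> R) then 0 else 1 :: 'b) = 0"
      by (intro prod_zero) auto
    with False show ?thesis by simp
  qed (auto intro: prod.neutral)
  have "(\<Sum>E\<in>Pow U. (\<Prod>e\<in>U. if e \<in> E then q e else 1 - q e) * of_bool (E \<inter> K = R))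
      = (\<Sum>E\<in>Pow U. \<Prod>e\<in>U. h e (e \<in> E))"
    unfolding indicator h_def by (simp add: prod.distrib)
  also have "\<dots> = (\<Prod>e\<in>U. h e True + h e False)" by (rule sum_Pow_prod_bool[OF fin])
  also have "\<dots> = (\<Prod>e\<in>U. if e \<in> K then (if e \<in> R then q e else 1 - q e) else 1)"
    by (rule prod.cong) (auto simp: h_def)
  also have "\<dots> = (\<Prod>e\<in>K. if e \<in> R then q e else 1 - q e)"
    using prod.inter_restrict[OF fin, of "\<lambda>e. if e \<in> R then q e else 1 - q e" K] assms(3)
    by (simp add: Int_absorb1)
  finally show ?thesis .
qed

lemma sum_graph_prob: "(\<Sum>E\<in>Pow (all_pairs N). graph_prob N p E) = 1"
  using sum_Pow_prod_restrict[OF finite_all_pairs, of "{}" "{}" N "edge_prob p"]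
  by (simp add: graph_prob_def)

lemma graph_prob_nonneg:
  assumes "\<forall>e\<in>all_pairs N. 0 \<le> edge_prob p e \<and> edge_prob p e \<le> 1"
  shows "graph_prob N p E \<ge> 0"
  unfolding graph_prob_def using assms by (intro prod_nonneg) auto

lemma expected_D_le:
  assumes "\<forall>e\<in>all_pairs N. 0 \<le> edge_prob p e \<and> edge_prob p e \<le> 1"
  shows "expected_D N g p \<le> real N"
proof -
  have "expected_D N g p \<le> (\<Sum>E\<in>Pow (all_pairs N). graph_prob N p E * real N)"
    unfolding expected_D_def
    using D_count_le graph_prob_nonneg[OF assms] by (intro sum_mono mult_left_mono) auto
  also have "\<dots> = real N" by (simp add: sum_distrib_right[symmetric] sum_graph_prob)
  finally show ?thesis .
qed

section \<open>Hanging stars\<close>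

definition incident_pairs :: "nat \<Rightarrow> nat set \<Rightarrow> nat set set" where
  "incident_pairs N S = {e \<in> all_pairs N. e \<inter> S \<noteq> {}}"

definition star_edges :: "nat set \<Rightarrow> nat set set" where
  "star_edges S = (\<lambda>s. {Min S, s}) ` (S - {Min S})"

text \<open>If the pairs of E meeting S are exactly these, S is dangling with bridge to j.\<close>
definition hanging_star :: "nat set \<Rightarrow> nat \<Rightarrow> nat set set" where
  "hanging_star S j = insert {Min S, j} (star_edges S)"

lemma star_edges_subset:
  assumes "finite S" "e \<in> star_edges S"
  shows "e \<subseteq> S"
proof -
  from assms(2) obtain s where "s \<in> S" "e = {Min S, s}" by (auto simp: star_edges_def)
  moreover from this have "Min S \<in> S" using assms(1) by (intro Min_in) auto
  ultimately show ?thesis by simp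
qed

lemma hanging_star_props:
  assumes S: "S \<subseteq> node_set N" "card S = g" "g \<ge> 1" and j: "j \<in> node_set N - S"
  shows "hanging_star S j \<subseteq> incident_pairs N S"
    "card (star_edges S) = g - 1" "card (hanging_star S j) = g"
proof -
  have fin: "finite S" using S(1) finite_subset by (auto simp: node_set_def)
  have centre: "Min S \<in> S" using fin S(2,3) by (intro Min_in) auto
  have not_star: "{Min S, j} \<notin> star_edges S"
    using j by (auto simp: star_edges_def doubleton_eq_iff)
  show "hanging_star S j \<subseteq> incident_pairs N S"
    using centre S(1) j by (auto simp: hanging_star_def incident_pairs_def star_edges_def all_pairs_def)
  have "inj_on (\<lambda>s. {Min S, s}) (S - {Min S})"
    by (rule inj_onI) (auto simp: doubleton_eq_iff)
  then show star: "card (star_edges S) = g - 1"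
    using centre fin S(2) by (simp add: star_edges_def card_image)
  with not_star fin S(3) show "card (hanging_star S j) = g"
    by (simp add: hanging_star_def star_edges_def)
qed

text \<open>Of three consecutive vertices of a cycle the middle one must be c, and then the
  edge closing the cycle misses c.\<close>
lemma not_has_cycle_in_if_edges_at:
  assumes "\<And>x y. x \<in> S \<Longrightarrow> y \<in> S \<Longrightarrow> adj E x y \<Longrightarrow> x = c \<or> y = c"
  shows "\<not> has_cycle_in E S"
proof
  assume "has_cycle_in E S"
  then obtain vs where vs: "length vs \<ge> 3" "distinct vs" "set vs \<subseteq> S"
    "\<forall>k. Suc k < length vs \<longrightarrow> adj E (vs ! k) (vs ! Suc k)" "adj E (last vs) (hd vs)"
    unfolding has_cycle_in_def by blast
  define n where "n = length vs"
  have mem: "vs ! k \<in> S" if "k < n" for k using vs(3) that nth_mem by (auto simp: n_def)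
  have dist: "vs ! i \<noteq> vs ! k" if "i < n" "k < n" "i \<noteq> k" for i k
    using vs(2) that nth_eq_iff_index_eq by (auto simp: n_def)
  have edge: "vs ! k = c \<or> vs ! Suc k = c" if "Suc k < n" for k
    by (rule assms) (use that vs(4) mem in \<open>auto simp: n_def\<close>)
  have "n \<ge> 3" using vs(1) by (simp add: n_def)
  then have "vs ! 1 = c"
    using edge[of 0] edge[of 1] dist[of 0 "Suc 1"] by auto
  moreover have "vs ! (n - 1) = c \<or> vs ! 0 = c"
  proof (rule assms)
    have "vs \<noteq> []" using vs(1) by auto
    then show "adj E (vs ! (n - 1)) (vs ! 0)" using vs(5) by (simp add: n_def hd_conv_nth last_conv_nth)
  qed (use \<open>n \<ge> 3\<close> mem in auto)
  moreover have "vs ! 0 \<noteq> c" "vs ! (n - 1) \<noteq> c"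
    using \<open>vs ! 1 = c\<close> dist[of 0 1] dist[of "n - 1" 1] \<open>n \<ge> 3\<close> by auto
  ultimately show False by simp
qed

lemma hanging_star_pattern_edges:
  assumes E: "E \<subseteq> all_pairs N" and fin: "finite S" and j: "j \<notin> S"
    and pattern: "E \<inter> incident_pairs N S = hanging_star S j"
  shows "induced_edges E S = star_edges S" "boundary_edges E S = {{Min S, j}}"
proof -
  have meets: "e \<inter> S \<noteq> {}" if "e \<in> E" "e \<subseteq> S" for e
  proof -
    have "card e = 2" using that(1) E all_pairs_card_2 by blast
    then have "e \<noteq> {}" by auto
    with that(2) show ?thesis by auto
  qed
  have present: "e \<in> E \<and> e \<inter> S \<noteq> {} \<longleftrightarrow> e \<in> hanging_star S j" for e
    using pattern E by (auto simp: incident_pairs_def)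
  have outside: "\<not> {Min S, j} \<subseteq> S" using j by simp
  show "induced_edges E S = star_edges S"
  proof (intro set_eqI iffI)
    fix e assume "e \<in> induced_edges E S"
    then have "e \<in> E" "e \<subseteq> S" by (auto simp: induced_edges_def)
    then have "e \<in> hanging_star S j" using meets present[of e] by simp
    with \<open>e \<subseteq> S\<close> outside show "e \<in> star_edges S" by (auto simp: hanging_star_def)
  next
    fix e assume "e \<in> star_edges S"
    then have "e \<in> E" "e \<subseteq> S"
      using present[of e] star_edges_subset[OF fin] by (auto simp: hanging_star_def)
    then show "e \<in> induced_edges E S" by (simp add: induced_edges_def)
  qed
  show "boundary_edges E S = {{Min S, j}}"
  proof (intro set_eqI iffI)
    fix e assume "e \<in> boundary_edges E S"
    then have "e \<in> hanging_star S j" "\<not> e \<subseteq> S"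
      using present[of e] by (auto simp: boundary_edges_def)
    with star_edges_subset[OF fin] show "e \<in> {{Min S, j}}" by (auto simp: hanging_star_def)
  next
    fix e assume "e \<in> {{Min S, j}}"
    with present[of e] outside show "e \<in> boundary_edges E S"
      by (simp add: hanging_star_def boundary_edges_def)
  qed
qed

lemma dangling_if_hanging_star:
  assumes E: "E \<subseteq> all_pairs N" and S: "S \<subseteq> node_set N" "card S = g" "g \<ge> 1"
    and j: "j \<in> node_set N - S" and pattern: "E \<inter> incident_pairs N S = hanging_star S j"
  shows "dangling E g S"
proof -
  have fin: "finite S" using S(1) finite_subset by (auto simp: node_set_def)
  note edges = hanging_star_pattern_edges[OF E fin _ pattern]
  have "\<not> has_cycle_in E S"
  proof (rule not_has_cycle_in_if_edges_at)
    fix x y assume "x \<in> S" "y \<in> S" "adj E x y"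
    then have "{x, y} \<in> induced_edges E S" by (simp add: induced_edges_def adj_def)
    then have "{x, y} \<in> star_edges S" using edges(1) j by simp
    then obtain s where "{x, y} = {Min S, s}" by (auto simp: star_edges_def)
    then show "x = Min S \<or> y = Min S" by (auto simp: doubleton_eq_iff)
  qed
  with S(2) edges j hanging_star_props(2)[OF S j] show ?thesis
    by (simp add: dangling_def)
qed

lemma hanging_star_inject:
  assumes "j \<notin> S" "j' \<notin> S" "hanging_star S j = hanging_star S j'"
  shows "j = j'"
proof -
  have "{Min S, j} \<notin> star_edges S" using assms(1) by (auto simp: star_edges_def doubleton_eq_iff)
  moreover have "{Min S, j} \<in> insert {Min S, j'} (star_edges S)"
    using assms(3) by (metis hanging_star_def insertI1)
  ultimately have "{Min S, j} = {Min S, j'}" by simp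
  then show ?thesis by (auto simp: doubleton_eq_iff)
qed

lemma sum_hanging_star_le_D_count:
  assumes E: "E \<subseteq> all_pairs N" and g: "g \<ge> 1" and V: "V \<subseteq> node_set N"
  shows "(\<Sum>S\<in>{S. S \<subseteq> V \<and> card S = g}. \<Sum>j\<in>node_set N - S.
           of_bool (E \<inter> incident_pairs N S = hanging_star S j)) \<le> real (D_count N g E)"
proof -
  define F where "F = {S. S \<subseteq> V \<and> card S = g}"
  have fin: "finite (node_set N)" by (simp add: node_set_def)
  then have "finite F"
    using V by (intro finite_subset[of F "Pow V"]) (auto simp: F_def intro: finite_subset)
  have "(\<Sum>j\<in>node_set N - S. of_bool (E \<inter> incident_pairs N S = hanging_star S j))
        \<le> (of_bool (dangling E g S) :: real)" if "S \<in> F" for S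
  proof -
    define J where "J = {j \<in> node_set N - S. E \<inter> incident_pairs N S = hanging_star S j}"
    have "card J \<le> 1"
      using hanging_star_inject[of _ S] by (auto simp: J_def card_le_Suc0_iff_eq fin)
    moreover have "J \<noteq> {} \<Longrightarrow> dangling E g S"
      using dangling_if_hanging_star[OF E _ _ g] that V by (auto simp: J_def F_def)
    ultimately show ?thesis
      using fin by (cases "J = {}") (auto simp: J_def Int_def)
  qed
  then have "(\<Sum>S\<in>F. \<Sum>j\<in>node_set N - S. of_bool (E \<inter> incident_pairs N S = hanging_star S j))
        \<le> (\<Sum>S\<in>F. of_bool (dangling E g S) :: real)"
    by (rule sum_mono)
  also have "\<dots> = real (card {S\<in>F. dangling E g S})"
    using \<open>finite F\<close> by (simp add: Int_def)
  also have "\<dots> \<le> real (D_count N g E)"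
    unfolding D_count_def using V fin
    by (intro of_nat_mono card_mono) (auto simp: F_def intro: finite_subset[of _ "Pow (node_set N)"])
  finally show ?thesis by (simp add: F_def)
qed

lemma expected_D_ge_sum_hanging_star:
  assumes probs: "\<forall>e\<in>all_pairs N. 0 \<le> edge_prob p e \<and> edge_prob p e \<le> 1"
    and g: "g \<ge> 1" and V: "V \<subseteq> node_set N"
  shows "(\<Sum>S\<in>{S. S \<subseteq> V \<and> card S = g}. \<Sum>j\<in>node_set N - S.
           \<Prod>e\<in>incident_pairs N S. if e \<in> hanging_star S j then edge_prob p e else 1 - edge_prob p e)
         \<le> expected_D N g p"
proof -
  define F where "F = {S. S \<subseteq> V \<and> card S = g}"
  define event where "event E S j \<longleftrightarrow> E \<inter> incident_pairs N S = hanging_star S j" for E S j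
  have "(\<Prod>e\<in>incident_pairs N S. if e \<in> hanging_star S j then edge_prob p e else 1 - edge_prob p e)
        = (\<Sum>E\<in>Pow (all_pairs N). graph_prob N p E * of_bool (event E S j))"
    if "S \<in> F" "j \<in> node_set N - S" for S j
  proof -
    have RK: "hanging_star S j \<subseteq> incident_pairs N S"
      using hanging_star_props(1)[of S N g j] that V g by (auto simp: F_def)
    have KU: "incident_pairs N S \<subseteq> all_pairs N" by (auto simp: incident_pairs_def)
    show ?thesis
      using sum_Pow_prod_restrict[OF finite_all_pairs RK KU, where q = "edge_prob p"]
      by (simp add: graph_prob_def event_def)
  qed
  then have "(\<Sum>S\<in>F. \<Sum>j\<in>node_set N - S.
           \<Prod>e\<in>incident_pairs N S. if e \<in> hanging_star S j then edge_prob p e else 1 - edge_prob p e)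
        = (\<Sum>E\<in>Pow (all_pairs N). graph_prob N p E * (\<Sum>S\<in>F. \<Sum>j\<in>node_set N - S. of_bool (event E S j)))"
    by (simp add: sum_distrib_left sum.swap[of _ "Pow (all_pairs N)"])
  also have "\<dots> \<le> expected_D N g p"
    unfolding expected_D_def F_def event_def
    using sum_hanging_star_le_D_count[OF _ g V] graph_prob_nonneg[OF probs]
    by (intro sum_mono mult_left_mono) auto
  finally show ?thesis by (simp add: F_def)
qed

lemma card_incident_pairs_le:
  assumes "S \<subseteq> node_set N"
  shows "card (incident_pairs N S) \<le> card S * N"
proof -
  have fin: "finite S" using assms finite_subset by (auto simp: node_set_def)
  have "incident_pairs N S \<subseteq> (\<lambda>(x, y). {x, y}) ` (S \<times> node_set N)"
  proof
    fix e assume "e \<in> incident_pairs N S"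
    then obtain i j where ij: "e = {i, j}" "i \<in> node_set N" "j \<in> node_set N" "i \<in> S \<or> j \<in> S"
      by (auto simp: incident_pairs_def all_pairs_def)
    then have "(i, j) \<in> S \<times> node_set N \<and> e = {i, j} \<or> (j, i) \<in> S \<times> node_set N \<and> e = {j, i}"
      by auto
    then show "e \<in> (\<lambda>(x, y). {x, y}) ` (S \<times> node_set N)" by (auto intro: rev_image_eqI)
  qed
  then have "card (incident_pairs N S) \<le> card (S \<times> node_set N)"
    using fin by (intro surj_card_le) (auto simp: node_set_def)
  also have "\<dots> = card S * N" by (simp add: card_cartesian_product node_set_def)
  finally show ?thesis .
qed

lemma prod_hanging_star_ge:
  assumes S: "S \<subseteq> node_set N" "card S = g" "g \<ge> 1" and j: "j \<in> node_set N - S"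
    and bounds: "\<forall>e\<in>incident_pairs N S. q \<le> edge_prob p e \<and> edge_prob p e \<le> r"
    and "0 \<le> q" "r \<le> 1"
  shows "q ^ g * (1 - r) ^ (g * N)
    \<le> (\<Prod>e\<in>incident_pairs N S. if e \<in> hanging_star S j then edge_prob p e else 1 - edge_prob p e)"
proof -
  define K where "K = incident_pairs N S"
  define R where "R = hanging_star S j"
  have RK: "R \<subseteq> K" and card_R: "card R = g"
    using hanging_star_props(1,3)[OF S j] by (auto simp: K_def R_def)
  have fin: "finite K" using finite_all_pairs by (auto simp: K_def incident_pairs_def)
  have "0 \<le> r"
  proof -
    obtain e where "e \<in> R" using card_R S(3) by fastforce
    with RK bounds \<open>0 \<le> q\<close> show ?thesis by (force simp: K_def)
  qed
  have present: "q ^ g \<le> (\<Prod>e\<in>R. edge_prob p e)"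
    using prod_mono[of R "\<lambda>_. q" "edge_prob p"] bounds RK card_R \<open>0 \<le> q\<close> by (force simp: K_def)
  moreover have "(1 - r) ^ (g * N) \<le> (\<Prod>e\<in>K - R. 1 - edge_prob p e)"
  proof -
    have "card (K - R) \<le> g * N"
      using card_incident_pairs_le[OF S(1)] S(2) card_mono[OF fin, of "K - R"] by (auto simp: K_def)
    then have "(1 - r) ^ (g * N) \<le> (1 - r) ^ card (K - R)"
      using \<open>0 \<le> r\<close> \<open>r \<le> 1\<close> by (intro power_decreasing) auto
    also have "\<dots> \<le> (\<Prod>e\<in>K - R. 1 - edge_prob p e)"
      using prod_mono[of "K - R" "\<lambda>_. 1 - r" "\<lambda>e. 1 - edge_prob p e"] bounds \<open>r \<le> 1\<close>
      by (force simp: K_def)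
    finally show ?thesis .
  qed
  ultimately have "q ^ g * (1 - r) ^ (g * N) \<le> (\<Prod>e\<in>R. edge_prob p e) * (\<Prod>e\<in>K - R. 1 - edge_prob p e)"
    using present \<open>0 \<le> q\<close> \<open>0 \<le> r\<close> \<open>r \<le> 1\<close>
    by (intro mult_mono) (auto intro: order_trans[OF zero_le_power])
  also have "\<dots> = (\<Prod>e\<in>K. if e \<in> R then edge_prob p e else 1 - edge_prob p e)"
    using fin RK by (simp add: prod.If_cases Int_absorb1 Diff_eq)
  finally show ?thesis by (simp add: K_def R_def)
qed

section \<open>Linear growth\<close>

lemma edge_prob_bounds:
  assumes H: "\<forall>i\<in>node_set N. \<forall>j\<in>node_set N. i \<noteq> j \<longrightarrow> p i j = p j i \<and> lo < p i j \<and> p i j \<le> 1"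
    and e: "e \<in> all_pairs N"
  shows "lo < edge_prob p e" "edge_prob p e \<le> 1"
    "e \<inter> V_p N b p \<noteq> {} \<Longrightarrow> edge_prob p e < b / real N"
proof -
  obtain i j where ij: "e = {i, j}" "i \<in> node_set N" "j \<in> node_set N" "i \<noteq> j"
    using e by (auto simp: all_pairs_def)
  with H have p: "p j i = p i j" "lo < p i j" "p i j \<le> 1" by auto
  with ij(1) have ep: "edge_prob p e = p i j" by (simp add: edge_prob_doubleton)
  with p show "lo < edge_prob p e" "edge_prob p e \<le> 1" by simp_all
  assume "e \<inter> V_p N b p \<noteq> {}"
  then have "i \<in> V_p N b p \<or> j \<in> V_p N b p" using ij(1) by auto
  with ij(2-4) p(1) show "edge_prob p e < b / real N" by (auto simp: ep V_p_def)
qed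

lemma exp_le_one_minus_pow:
  fixes b :: real
  assumes "b > 0" "2 * b \<le> real N"
  shows "exp (- 2 * b) \<le> (1 - b / real N) ^ N"
proof -
  define x where "x = b / real N"
  have "real N > 0" using assms by simp
  then have x: "0 \<le> x" "x \<le> 1 / 2" "real N * x = b" using assms by (auto simp: x_def field_simps)
  have "- 2 * b \<le> real N * (- x - 2 * x\<^sup>2)"
  proof -
    have "real N * (- x - 2 * x\<^sup>2) = - b - 2 * b * x" using x(3) by (simp add: power2_eq_square algebra_simps)
    moreover have "b * x \<le> b / 2" using assms(1) x(2) by (simp add: mult_left_le)
    ultimately show ?thesis by linarith
  qed
  also have "\<dots> \<le> real N * ln (1 - x)"
    using ln_one_minus_pos_lower_bound[OF x(1,2)] by (intro mult_left_mono) auto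
  finally have "exp (- 2 * b) \<le> exp (ln (1 - x)) ^ N" by (simp add: exp_of_nat_mult[symmetric])
  moreover have "exp (ln (1 - x)) = 1 - x" using x(2) by simp
  ultimately show ?thesis by (simp add: x_def)
qed

lemma edge_prob_unit_interval:
  assumes H: "\<forall>i\<in>node_set N. \<forall>j\<in>node_set N. i \<noteq> j \<longrightarrow> p i j = p j i \<and> lo < p i j \<and> p i j \<le> 1"
    and "0 \<le> lo"
  shows "\<forall>e\<in>all_pairs N. 0 \<le> edge_prob p e \<and> edge_prob p e \<le> 1"
  using edge_prob_bounds(1,2)[OF H] assms(2) by (auto intro: less_imp_le order.strict_trans1)

lemma prod_hanging_star_ge_V_p:
  fixes \<epsilon> b :: real
  assumes H: "\<forall>i\<in>node_set N. \<forall>j\<in>node_set N. i \<noteq> j \<longrightarrow>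
          p i j = p j i \<and> (1 + \<epsilon>) / real N < p i j \<and> p i j \<le> 1"
    and "\<epsilon> > 0" "b \<le> real N"
    and S: "S \<subseteq> V_p N b p" "card S = g" "g \<ge> 1" and j: "j \<in> node_set N - S"
  shows "(1 / real N) ^ g * (1 - b / real N) ^ (g * N)
    \<le> (\<Prod>e\<in>incident_pairs N S. if e \<in> hanging_star S j then edge_prob p e else 1 - edge_prob p e)"
proof (rule prod_hanging_star_ge)
  have N: "real N > 0" using j by (simp add: node_set_def)
  show "S \<subseteq> node_set N" using S(1) by (auto simp: V_p_def)
  show "0 \<le> 1 / real N" "b / real N \<le> 1" using N \<open>b \<le> real N\<close> by (simp_all add: field_simps)
  show "\<forall>e\<in>incident_pairs N S. 1 / real N \<le> edge_prob p e \<and> edge_prob p e \<le> b / real N"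
  proof
    fix e assume "e \<in> incident_pairs N S"
    then have e: "e \<in> all_pairs N" "e \<inter> V_p N b p \<noteq> {}" using S(1) by (auto simp: incident_pairs_def)
    have "1 / real N \<le> (1 + \<epsilon>) / real N" using \<open>\<epsilon> > 0\<close> N by (simp add: divide_right_mono)
    also have "\<dots> < edge_prob p e" using edge_prob_bounds(1)[OF H e(1)] .
    finally show "1 / real N \<le> edge_prob p e \<and> edge_prob p e \<le> b / real N"
      using edge_prob_bounds(3)[OF H e] by simp
  qed
qed (use S j in auto)

lemma card_subsets_ge_pow:
  assumes "finite A" "real k \<le> x" "x \<le> real (card A)"
  shows "(x / real k) ^ k \<le> real (card {S. S \<subseteq> A \<and> card S = k})"
proof -
  have "(x / real k) ^ k \<le> (real (card A) / real k) ^ k"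
    using assms(2,3) by (intro power_mono divide_right_mono) auto
  also have "\<dots> \<le> real (card A choose k)"
    using assms(2,3) by (intro binomial_ge_n_over_k_pow_k) simp
  finally show ?thesis using assms(1) by (simp add: n_subsets)
qed

lemma expected_D_ge_linear:
  fixes \<epsilon> b \<eta> :: real
  assumes H: "\<forall>i\<in>node_set N. \<forall>j\<in>node_set N. i \<noteq> j \<longrightarrow>
          p i j = p j i \<and> (1 + \<epsilon>) / real N < p i j \<and> p i j \<le> 1"
    and Vp: "\<eta> * real N < real (card (V_p N b p))"
    and "\<epsilon> > 0" "b > 0" "g \<ge> 1"
    and large: "2 * real g \<le> real N" "2 * b \<le> real N" "real g \<le> \<eta> * real N"
  shows "(\<eta> / real g) ^ g * exp (- 2 * b) ^ g / 2 * real N \<le> expected_D N g p"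
proof -
  define F where "F = {S. S \<subseteq> V_p N b p \<and> card S = g}"
  define L where "L = (1 / real N) ^ g * (1 - b / real N) ^ (g * N)"
  have N: "real N > 0" using large(1) \<open>g \<ge> 1\<close> by simp
  have Vp_sub: "V_p N b p \<subseteq> node_set N" by (auto simp: V_p_def)
  have "finite (V_p N b p)" using Vp_sub by (rule finite_subset) (simp add: node_set_def)
  then have card_F: "(\<eta> * real N / real g) ^ g \<le> real (card F)"
    unfolding F_def using Vp large(3) by (intro card_subsets_ge_pow) auto
  have "exp (- 2 * b) ^ g \<le> ((1 - b / real N) ^ N) ^ g"
    using exp_le_one_minus_pow[OF \<open>b > 0\<close> large(2)] by (intro power_mono) auto
  then have L: "(1 / real N) ^ g * exp (- 2 * b) ^ g \<le> L"
    unfolding L_def by (intro mult_left_mono) (auto simp: power_mult[symmetric] mult.commute)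
  have "(\<eta> / real g) ^ g * exp (- 2 * b) ^ g / 2 * real N
      = (\<eta> * real N / real g) ^ g * (real N / 2 * ((1 / real N) ^ g * exp (- 2 * b) ^ g))"
    using N by (simp add: power_mult_distrib power_divide field_simps)
  also have "\<dots> \<le> real (card F) * ((real N - real g) * L)"
    using card_F L large(1) N by (intro mult_mono) auto
  also have "\<dots> = (\<Sum>S\<in>F. \<Sum>j\<in>node_set N - S. L)"
  proof -
    have "card (node_set N - S) = N - g" if "S \<in> F" for S
      using that Vp_sub by (auto simp: F_def node_set_def card_Diff_subset finite_subset)
    then show ?thesis using large(1) by (simp add: of_nat_diff)
  qed
  also have "\<dots> \<le> (\<Sum>S\<in>F. \<Sum>j\<in>node_set N - S.
      \<Prod>e\<in>incident_pairs N S. if e \<in> hanging_star S j then edge_prob p e else 1 - edge_prob p e)"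
    unfolding L_def F_def using prod_hanging_star_ge_V_p[OF H \<open>\<epsilon> > 0\<close>] large(2) \<open>b > 0\<close> \<open>g \<ge> 1\<close>
    by (intro sum_mono) auto
  also have "\<dots> \<le> expected_D N g p"
    unfolding F_def using edge_prob_unit_interval[OF H] \<open>\<epsilon> > 0\<close> \<open>g \<ge> 1\<close> Vp_sub
    by (intro expected_D_ge_sum_hanging_star) auto
  finally show ?thesis .
qed

theorem theorem3p4:
  fixes g :: nat and \<epsilon> b \<eta> :: real
  assumes "g \<ge> 1" and "\<epsilon> > 0" and "b > 0" and "\<eta> > 0"
  shows "\<exists>c>0. \<exists>N0::nat. \<forall>N\<ge>N0. \<forall>p :: nat \<Rightarrow> nat \<Rightarrow> real.
     ((\<forall>i\<in>node_set N. \<forall>j\<in>node_set N. i \<noteq> j \<longrightarrow>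
          p i j = p j i \<and> (1 + \<epsilon>) / real N < p i j \<and> p i j \<le> 1)
      \<and> real (card (V_p N b p)) > \<eta> * real N)
     \<longrightarrow> c * real N \<le> expected_D N g p \<and> expected_D N g p \<le> real N"
proof -
  define c where "c = (\<eta> / real g) ^ g * exp (- 2 * b) ^ g / 2"
  define N0 where "N0 = nat \<lceil>2 * real g + 2 * b + real g / \<eta>\<rceil>"
  have "c > 0" using assms by (simp add: c_def)
  moreover have "c * real N \<le> expected_D N g p \<and> expected_D N g p \<le> real N"
    if "N \<ge> N0" and H: "\<forall>i\<in>node_set N. \<forall>j\<in>node_set N. i \<noteq> j \<longrightarrow>
          p i j = p j i \<and> (1 + \<epsilon>) / real N < p i j \<and> p i j \<le> 1"
      and Vp: "real (card (V_p N b p)) > \<eta> * real N" for N p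
  proof
    have "2 * real g + 2 * b + real g / \<eta> \<le> real N"
      using \<open>N \<ge> N0\<close> unfolding N0_def by linarith
    moreover have "real g / \<eta> \<ge> 0" using \<open>\<eta> > 0\<close> by simp
    ultimately have "2 * real g \<le> real N" "2 * b \<le> real N" "real g / \<eta> \<le> real N"
      using \<open>b > 0\<close> by linarith+
    moreover from this(3) have "real g \<le> \<eta> * real N"
      using \<open>\<eta> > 0\<close> by (simp add: divide_le_eq mult.commute)
    ultimately show "c * real N \<le> expected_D N g p"
      using expected_D_ge_linear[OF H Vp] assms by (simp add: c_def)
    show "expected_D N g p \<le> real N"
      using edge_prob_unit_interval[OF H] \<open>\<epsilon> > 0\<close> by (intro expected_D_le) simp
  qed
  ultimately show ?thesis by blast
qed

end
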